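(* Let $n$ be even and $m\le n$. Let $X\in\{0,1\}^{n\times m}$ follow the rank-one model with parameters $\mathbf u\in[c,C]^n$, $\mathbf v\in[c,C]^m$, and let $\hat{\mathbf u}=[\hat u_1,\dots,\hat u_n]^\top$ be the output of the split spectral estimator applied to $X$ and $\|\mathbf v\|$. Then for every $i\in\{1,\dots,n\}$ and every $0<\epsilon<1$, $$\Pr\big(|\hat u_i-u_i|>\epsilon\big)\le 3n\exp\!\left(-C_1\, m\,\epsilon^2\right).$$
   Context: Rank-one model: fix constants $0<c<C<1$. For vectors $\mathbf u\in[c,C]^n$ and $\mathbf v\in[c,C]^m$, a random matrix $X\in\{0,1\}^{n\times m}$ follows the rank-one model if its entries are independent with $X_{i,j}\sim\mathrm{Bernoulli}(u_iv_j)$, so $\mathbb E X=\mathbf u\mathbf v^\top$. The norm $\|\mathbf v\|$ (Euclidean) is assumed known. The leading right singular vector of a matrix with nonnegative entries is taken with sign chosen so that it has nonnegative inner product with $\mathbf v$. Split spectral estimator (Algorithm 1): given $X$ and $\|\mathbf v\|$, let $X_A$ be the first $n/2$ rows and $X_B$ the last $n/2$ rows of $X$. Let $\hat{\mathbf v}_A,\hat{\mathbf v}_B\in\mathbb R^m$ be leading right singular vectors of $X_A$ and $X_B$ respectively. Set $\hat{\mathbf u}_A=X_A\hat{\mathbf v}_B/(\|\hat{\mathbf v}_B\|\,\|\mathbf v\|)$ and $\hat{\mathbf u}_B=X_B\hat{\mathbf v}_A/(\|\hat{\mathbf v}_A\|\,\|\mathbf v\|)$, and output $\hat{\mathbf u}=\begin{bmatrix}\hat{\mathbf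 u}_A\\ \hat{\mathbf u}_B\end{bmatrix}$. Constants: $C_2=c^4/48$, $C_3=4/c^4+30\sqrt2$, $C_4=c^2\min(1/18,\,C_2/9)$, $C_1=\min\big(C_4,(6C_3/c)^{-2}\big)$. *)

theory Defs
  imports "HOL-Probability.Probability"
begin

text \<open>Vectors in R^k are represented as functions nat => real, only indices below k matter.
  A k x m matrix is a function nat => nat => real (row index, column index).\<close>

definition vinner :: "nat \<Rightarrow> (nat \<Rightarrow> real) \<Rightarrow> (nat \<Rightarrow> real) \<Rightarrow> real" where
  "vinner k x y = (\<Sum>j<k. x j * y j)"

definition vnorm :: "nat \<Rightarrow> (nat \<Rightarrow> real) \<Rightarrow> real" where
  "vnorm k x = sqrt (\<Sum>j<k. (x j)\<^sup>2)"

definition matvec :: "nat \<Rightarrow> (nat \<Rightarrow> nat \<Rightarrow> real) \<Rightarrow> (nat \<Rightarrow> real) \<Rightarrow> (nat \<Rightarrow> real)" where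
  "matvec m M x = (\<lambda>i. \<Sum>j<m. M i j * x j)"

definition leading_rsv ::
  "nat \<Rightarrow> nat \<Rightarrow> (nat \<Rightarrow> nat \<Rightarrow> real) \<Rightarrow> (nat \<Rightarrow> real) \<Rightarrow> (nat \<Rightarrow> real) \<Rightarrow> bool" where
  "leading_rsv k m M v w \<longleftrightarrow>
     vnorm m w = 1 \<and>
     (\<forall>x. vnorm m x = 1 \<longrightarrow> vnorm k (matvec m M x) \<le> vnorm k (matvec m M w)) \<and>
     vinner m w v \<ge> 0"

definition rank_one_model :: "nat \<Rightarrow> nat \<Rightarrow> (nat \<Rightarrow> real) \<Rightarrow> (nat \<Rightarrow> real) \<Rightarrow> (nat \<times> nat \<Rightarrow> bool) pmf" where
  "rank_one_model n m u v = Pi_pmf ({..<n} \<times> {..<m}) False (\<lambda>(i, j). bernoulli_pmf (u i * v j))"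

definition to_real_mat :: "(nat \<times> nat \<Rightarrow> bool) \<Rightarrow> nat \<Rightarrow> nat \<Rightarrow> real" where
  "to_real_mat X i j = (if X (i, j) then 1 else 0)"

definition top_half :: "nat \<Rightarrow> (nat \<times> nat \<Rightarrow> bool) \<Rightarrow> nat \<Rightarrow> nat \<Rightarrow> real" where
  "top_half n X i j = to_real_mat X i j"

definition bot_half :: "nat \<Rightarrow> (nat \<times> nat \<Rightarrow> bool) \<Rightarrow> nat \<Rightarrow> nat \<Rightarrow> real" where
  "bot_half n X i j = to_real_mat X (n div 2 + i) j"

text \<open>Split spectral estimator (Algorithm 1), given choices selA, selB of the leading right
  singular vectors of X_A and X_B and the known norm nv = ||v||. Output indexed 0..n-1.\<close>
definition split_spectral ::
  "nat \<Rightarrow> nat \<Rightarrow> ((nat \<Rightarrow> nat \<Rightarrow> real) \<Rightarrow> (nat \<Rightarrow> real)) \<Rightarrow> ((nat \<Rightarrow> nat \<Rightarrow> real) \<Rightarrow> (nat \<Rightarrow> real))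
     \<Rightarrow> real \<Rightarrow> (nat \<times> nat \<Rightarrow> bool) \<Rightarrow> nat \<Rightarrow> real" where
  "split_spectral n m selA selB nv X =
     (let XA = top_half n X; XB = bot_half n X;
          vA = selA XA; vB = selB XB
      in (\<lambda>i. if i < n div 2 then matvec m XA vB i / (vnorm m vB * nv)
              else matvec m XB vA (i - n div 2) / (vnorm m vA * nv)))"

definition C2 :: "real \<Rightarrow> real" where "C2 c = c ^ 4 / 48"
definition C3 :: "real \<Rightarrow> real" where "C3 c = 4 / c ^ 4 + 30 * sqrt 2"
definition C4 :: "real \<Rightarrow> real" where "C4 c = c\<^sup>2 * min (1/18) (C2 c / 9)"
definition C1 :: "real \<Rightarrow> real" where "C1 c = min (C4 c) ((6 * C3 c / c) powr (-2))"

end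

(* Row i of X is estimated with the leading right singular vector y of the other half of the
   rows.  By Hoeffding's inequality every entry of that half's Gram matrix is within
   eps h c^4 / 8 of its mean ||u_half||^2 v v^T + (diagonal of Bernoulli variances), except on an
   event of probability m^2 2 exp(-eps^2 h c^8 / 32).  Off this event the quadratic form of the
   half is a small perturbation of ||u_half||^2 <v, x>^2, so the spectral gap makes y unique and
   nearly parallel to v.  Uniqueness allows replacing y by the singular vector of the masked half,
   which is independent of row i; a second Hoeffding bound then controls <X_i, y> around
   u_i <v, y>, failing with probability 2 exp(-eps^2 m c^2 / 2).  Both failure probabilities fit
   into 3 n exp(-C1 m eps^2) whenever this bound is below 1. *)

theory Submission
  imports Defs
begin

lemma prob_pair_pmf_le:
  fixes p :: "'a pmf" and q :: "'b pmf"
  assumes "\<And>x. measure_pmf.prob q {y. (x, y) \<in> S} \<le> r"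
  shows "measure_pmf.prob (pair_pmf p q) S \<le> r"
proof -
  have r0: "r \<ge> 0" using assms[of undefined] by (meson measure_nonneg order_trans)
  have "emeasure (pair_pmf p q) S = (\<integral>\<^sup>+x. emeasure (map_pmf (Pair x) q) S \<partial>p)"
    unfolding pair_pmf_def by (simp add: map_pmf_def[symmetric])
  also have "\<dots> \<le> (\<integral>\<^sup>+x. ennreal r \<partial>p)"
  proof (intro nn_integral_mono)
    fix x
    have "emeasure (map_pmf (Pair x) q) S = ennreal (measure_pmf.prob q {y. (x, y) \<in> S})"
      by (simp add: vimage_def measure_pmf.emeasure_eq_measure)
    also have "\<dots> \<le> ennreal r" using assms ennreal_leI by blast
    finally show "emeasure (map_pmf (Pair x) q) S \<le> ennreal r" .
  qed
  also have "\<dots> = ennreal r" by simp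
  finally show ?thesis using r0 by (simp add: measure_pmf.emeasure_eq_measure)
qed

lemma prob_Pi_pmf_conj:
  fixes F :: "'a \<Rightarrow> bool pmf"
  assumes "finite I" "a \<in> I" "b \<in> I"
  shows "measure_pmf.prob (Pi_pmf I False F) {X. X a \<and> X b}
       = (if a = b then pmf (F a) True else pmf (F a) True * pmf (F b) True)"
proof -
  define B where "B x = (if x = a \<or> x = b then {True} else UNIV)" for x
  have "{X. X a \<and> X b} = Pi I B" using assms by (auto simp: B_def Pi_def)
  hence "measure_pmf.prob (Pi_pmf I False F) {X. X a \<and> X b} = (\<Prod>x\<in>I. measure_pmf.prob (F x) (B x))"
    using measure_Pi_pmf_Pi[OF assms(1)] by simp
  also have "\<dots> = (\<Prod>x\<in>I. if x \<in> {a, b} then pmf (F x) True else 1)"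
    by (intro prod.cong refl) (auto simp: B_def measure_pmf_single)
  also have "\<dots> = (\<Prod>x\<in>{a, b}. pmf (F x) True)"
  proof -
    have "I \<inter> {x. x = a \<or> x = b} = {a, b}" using assms by auto
    thus ?thesis using assms by (simp add: prod.If_cases)
  qed
  finally show ?thesis by auto
qed

lemma hoeffding_Pi_pmf_conj:
  fixes I :: "'a set" and F :: "'a \<Rightarrow> bool pmf" and \<alpha> \<beta> :: "'k \<Rightarrow> 'a" and w :: "'k \<Rightarrow> real"
  defines "P \<equiv> Pi_pmf I False F"
  assumes "finite I" "finite L" and coords: "\<And>k. k \<in> L \<Longrightarrow> \<alpha> k \<in> I \<and> \<beta> k \<in> I"
    and disj: "disjoint_family_on (\<lambda>k. {\<alpha> k, \<beta> k}) L"
    and "(\<Sum>k\<in>L. (w k)\<^sup>2) > 0" "t \<ge> 0"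
  shows "measure_pmf.prob P
     {X. \<bar>(\<Sum>k\<in>L. w k * of_bool (X (\<alpha> k) \<and> X (\<beta> k))) -
          (\<Sum>k\<in>L. w k * measure_pmf.prob P {X. X (\<alpha> k) \<and> X (\<beta> k)})\<bar> \<ge> t}
     \<le> 2 * exp (-2 * t\<^sup>2 / (\<Sum>k\<in>L. (w k)\<^sup>2))"
proof -
  define Y where "Y = (\<lambda>k (X::'a \<Rightarrow> bool). w k * of_bool (X (\<alpha> k) \<and> X (\<beta> k)))"
  have "prob_space.indep_vars P (\<lambda>_. count_space UNIV) (\<lambda>x X. X x) I"
    unfolding P_def by (rule indep_vars_Pi_pmf[OF \<open>finite I\<close>])
  hence "prob_space.indep_vars P (\<lambda>k. PiM {\<alpha> k, \<beta> k} (\<lambda>_. count_space UNIV))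
       (\<lambda>k X. restrict X {\<alpha> k, \<beta> k}) L"
    by (rule prob_space.indep_vars_restrict[OF measure_pmf.prob_space_axioms])
      (use coords disj in auto)
  hence "prob_space.indep_vars P (\<lambda>_. borel)
       (\<lambda>k X. (\<lambda>r. w k * of_bool (r (\<alpha> k) \<and> r (\<beta> k))) (restrict X {\<alpha> k, \<beta> k})) L"
    by (rule prob_space.indep_vars_compose2[OF measure_pmf.prob_space_axioms]) measurable
  hence indep: "prob_space.indep_vars P (\<lambda>_. borel) Y L"
    by (rule prob_space.indep_vars_cong[OF measure_pmf.prob_space_axioms, THEN iffD1, rotated -1])
      (auto simp: Y_def)
  interpret H: Hoeffding_ineq P L Y "\<lambda>k. min 0 (w k)" "\<lambda>k. max 0 (w k)"
      "\<Sum>k\<in>L. measure_pmf.expectation P (Y k)"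
    by unfold_locales (use \<open>finite L\<close> indep in \<open>auto simp: Y_def\<close>)
  have width: "(\<Sum>k\<in>L. (max 0 (w k) - min 0 (w k))\<^sup>2) = (\<Sum>k\<in>L. (w k)\<^sup>2)"
    by (intro sum.cong) (auto simp: max_def min_def power2_eq_square)
  have "Y k = (\<lambda>X. w k * indicator {X. X (\<alpha> k) \<and> X (\<beta> k)} X)" for k
    by (auto simp: Y_def fun_eq_iff indicator_def)
  hence mean: "measure_pmf.expectation P (Y k) = w k * measure_pmf.prob P {X. X (\<alpha> k) \<and> X (\<beta> k)}" for k
    by simp
  have "measure_pmf.prob P {X \<in> space P. \<bar>(\<Sum>k\<in>L. Y k X) - (\<Sum>k\<in>L. measure_pmf.expectation P (Y k))\<bar> \<ge> t}
     \<le> 2 * exp (-2 * t\<^sup>2 / (\<Sum>k\<in>L. (max 0 (w k) - min 0 (w k))\<^sup>2))"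
    by (rule H.Hoeffding_ineq_abs_ge) (use width assms(6,7) in simp_all)
  thus ?thesis unfolding width mean by (simp add: Y_def)
qed

section \<open>Maximizers of the Rayleigh quotient\<close>

definition sqnorm :: "nat \<Rightarrow> (nat \<Rightarrow> real) \<Rightarrow> real" where
  "sqnorm m x = (\<Sum>j<m. (x j)\<^sup>2)"

definition sqnorm_mv :: "nat \<Rightarrow> nat \<Rightarrow> (nat \<Rightarrow> nat \<Rightarrow> real) \<Rightarrow> (nat \<Rightarrow> real) \<Rightarrow> real" where
  "sqnorm_mv h m M x = sqnorm h (matvec m M x)"

definition unit_maximizer :: "nat \<Rightarrow> nat \<Rightarrow> (nat \<Rightarrow> nat \<Rightarrow> real) \<Rightarrow> (nat \<Rightarrow> real) \<Rightarrow> bool" where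
  "unit_maximizer h m M y \<longleftrightarrow>
     sqnorm m y = 1 \<and> (\<forall>x. sqnorm m x = 1 \<longrightarrow> sqnorm_mv h m M x \<le> sqnorm_mv h m M y)"

lemma sqnorm_mv_eq: "sqnorm_mv h m M x = (\<Sum>k<h. (\<Sum>j<m. M k j * x j)\<^sup>2)"
  by (simp add: sqnorm_mv_def sqnorm_def matvec_def)

lemma vnorm_eq_sqrt_sqnorm: "vnorm m x = sqrt (sqnorm m x)"
  by (simp add: vnorm_def sqnorm_def)

lemma sqnorm_nonneg: "sqnorm m x \<ge> 0"
  unfolding sqnorm_def by (intro sum_nonneg) auto

lemma sqnorm_eq_0_iff: "sqnorm m x = 0 \<longleftrightarrow> (\<forall>j<m. x j = 0)"
  unfolding sqnorm_def by (subst sum_nonneg_eq_0_iff) auto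

lemma sqnorm_scale: "sqnorm m (\<lambda>j. a * x j) = a\<^sup>2 * sqnorm m x"
  unfolding sqnorm_def by (simp add: sum_distrib_left power_mult_distrib)

lemma sqnorm_mv_scale: "sqnorm_mv h m M (\<lambda>j. a * x j) = a\<^sup>2 * sqnorm_mv h m M x"
proof -
  have "(\<Sum>j<m. M k j * (a * x j))\<^sup>2 = a\<^sup>2 * (\<Sum>j<m. M k j * x j)\<^sup>2" for k
    by (simp add: sum_distrib_left power_mult_distrib[symmetric] algebra_simps)
  thus ?thesis unfolding sqnorm_mv_eq by (simp add: sum_distrib_left)
qed

lemma sum_rotate_squares:
  fixes p q :: "'a \<Rightarrow> real"
  shows "(\<Sum>j\<in>A. (a * p j + b * q j)\<^sup>2) + (\<Sum>j\<in>A. (b * p j - a * q j)\<^sup>2)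
       = (a\<^sup>2 + b\<^sup>2) * ((\<Sum>j\<in>A. (p j)\<^sup>2) + (\<Sum>j\<in>A. (q j)\<^sup>2))"
proof -
  have "(a * p j + b * q j)\<^sup>2 + (b * p j - a * q j)\<^sup>2 = (a\<^sup>2 + b\<^sup>2) * ((p j)\<^sup>2 + (q j)\<^sup>2)" for j
    by (simp add: power2_eq_square algebra_simps)
  thus ?thesis by (simp add: sum.distrib[symmetric] sum_distrib_left[symmetric])
qed

lemma sqnorm_rotate:
  "sqnorm m (\<lambda>j. a * y j + b * z j) + sqnorm m (\<lambda>j. b * y j - a * z j)
   = (a\<^sup>2 + b\<^sup>2) * (sqnorm m y + sqnorm m z)"
  unfolding sqnorm_def by (rule sum_rotate_squares)

lemma sqnorm_mv_rotate:
  "sqnorm_mv h m M (\<lambda>j. a * y j + b * z j) + sqnorm_mv h m M (\<lambda>j. b * y j - a * z j)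
   = (a\<^sup>2 + b\<^sup>2) * (sqnorm_mv h m M y + sqnorm_mv h m M z)"
proof -
  have "(\<Sum>j<m. M k j * (a * y j + b * z j)) = a * (\<Sum>j<m. M k j * y j) + b * (\<Sum>j<m. M k j * z j)"
    and "(\<Sum>j<m. M k j * (b * y j - a * z j)) = b * (\<Sum>j<m. M k j * y j) - a * (\<Sum>j<m. M k j * z j)"
    for k by (simp_all add: sum.distrib sum_subtractf sum_distrib_left algebra_simps)
  thus ?thesis unfolding sqnorm_mv_eq by (simp add: sum_rotate_squares)
qed

lemma vinner_sq_le: "(vinner m v y)\<^sup>2 \<le> sqnorm m v * sqnorm m y"
  unfolding vinner_def sqnorm_def by (rule Cauchy_Schwarz_ineq_sum)

lemma unit_normalize:
  assumes "sqnorm m v > 0"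
  defines "w \<equiv> \<lambda>j. v j / sqrt (sqnorm m v)"
  shows "sqnorm m w = 1" "vinner m v w = sqrt (sqnorm m v)"
proof -
  show "sqnorm m w = 1"
    using sqnorm_scale[of m "1 / sqrt (sqnorm m v)" v] assms by (simp add: w_def power_divide)
  have "vinner m v w = sqnorm m v / sqrt (sqnorm m v)"
    by (simp add: w_def vinner_def sqnorm_def sum_divide_distrib power2_eq_square)
  thus "vinner m v w = sqrt (sqnorm m v)" using assms by (simp add: real_div_sqrt)
qed

lemma leading_rsv_iff: "leading_rsv h m M v y \<longleftrightarrow> unit_maximizer h m M y \<and> vinner m v y \<ge> 0"
  by (simp add: leading_rsv_def unit_maximizer_def vnorm_eq_sqrt_sqnorm sqnorm_mv_def
      vinner_def mult.commute)

lemma leading_rsv_cong: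
  assumes "\<And>k j. k < h \<Longrightarrow> j < m \<Longrightarrow> M k j = M' k j"
  shows "leading_rsv h m M v w = leading_rsv h m M' v w"
  using assms by (simp add: leading_rsv_def vnorm_def matvec_def)

lemma unit_maximizer_le:
  assumes "unit_maximizer h m M y"
  shows "sqnorm_mv h m M x \<le> sqnorm_mv h m M y * sqnorm m x"
proof (cases "sqnorm m x = 0")
  case True
  hence "sqnorm_mv h m M x = 0" by (simp add: sqnorm_eq_0_iff sqnorm_mv_eq)
  thus ?thesis using True by simp
next
  case False
  hence pos: "sqnorm m x > 0" using sqnorm_nonneg[of m x] by simp
  have "sqnorm m (\<lambda>j. 1 / sqrt (sqnorm m x) * x j) = 1"
    using unit_normalize(1)[OF pos] by simp
  hence "(1 / sqrt (sqnorm m x))\<^sup>2 * sqnorm_mv h m M x \<le> sqnorm_mv h m M y"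
    using assms unfolding sqnorm_mv_scale[symmetric] unit_maximizer_def by blast
  thus ?thesis using pos by (simp add: sqnorm_mv_scale power_divide divide_le_eq)
qed

text \<open>The maximizers span an eigenspace: a combination \<open>x\<close> and its rotation \<open>x'\<close> together
  attain the top value times \<open>sqnorm x + sqnorm x'\<close>, and neither can exceed its share.\<close>
lemma unit_maximizer_combination:
  fixes a b :: real
  assumes y: "unit_maximizer h m M y" and z: "unit_maximizer h m M z"
  defines "x \<equiv> \<lambda>j. a * y j + b * z j"
  shows "sqnorm_mv h m M x = sqnorm_mv h m M y * sqnorm m x"
proof -
  define x' where "x' = (\<lambda>j. b * y j - a * z j)"
  define top where "top = sqnorm_mv h m M y"
  have "sqnorm_mv h m M z = top"
    using y z by (auto simp: unit_maximizer_def top_def intro: antisym)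
  hence "sqnorm_mv h m M x + sqnorm_mv h m M x' = (a\<^sup>2 + b\<^sup>2) * (top + top)"
    unfolding x_def x'_def sqnorm_mv_rotate top_def by simp
  also have "\<dots> = top * (sqnorm m x + sqnorm m x')"
    using y z unfolding x_def x'_def sqnorm_rotate by (simp add: unit_maximizer_def)
  finally have "sqnorm_mv h m M x + sqnorm_mv h m M x' = top * sqnorm m x + top * sqnorm m x'"
    by (simp add: algebra_simps)
  moreover have "sqnorm_mv h m M x \<le> top * sqnorm m x" "sqnorm_mv h m M x' \<le> top * sqnorm m x'"
    using unit_maximizer_le[OF y] top_def by auto
  ultimately show ?thesis unfolding top_def by linarith
qed

section \<open>Gram matrices close to their Bernoulli mean\<close>

text \<open>Expectation of the Gram entry \<open>(\<Sum>k. X k j * X k l)\<close> when the entries \<open>X k j\<close> are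
  independent Bernoulli variables with means \<open>q k * v j\<close>.\<close>
definition mean_gram :: "nat \<Rightarrow> (nat \<Rightarrow> real) \<Rightarrow> (nat \<Rightarrow> real) \<Rightarrow> nat \<Rightarrow> nat \<Rightarrow> real" where
  "mean_gram h q v j l = (\<Sum>k<h. if j = l then q k * v j else q k * v j * (q k * v l))"

lemma sqnorm_mv_eq_gram:
  "sqnorm_mv h m M x = (\<Sum>j<m. \<Sum>l<m. (\<Sum>k<h. M k j * M k l) * x j * x l)"
proof -
  have "sqnorm_mv h m M x = (\<Sum>k<h. \<Sum>j<m. \<Sum>l<m. M k j * x j * (M k l * x l))"
    by (simp add: sqnorm_mv_eq power2_eq_square sum_product)
  also have "\<dots> = (\<Sum>j<m. \<Sum>l<m. \<Sum>k<h. M k j * x j * (M k l * x l))"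
    by (subst sum.swap) (simp add: sum.swap[of _ "{..<h}"])
  also have "\<dots> = (\<Sum>j<m. \<Sum>l<m. (\<Sum>k<h. M k j * M k l) * x j * x l)"
    by (simp add: sum_distrib_left sum_distrib_right mult_ac)
  finally show ?thesis .
qed

lemma bilinear_form_diff_le:
  fixes A B :: "nat \<Rightarrow> nat \<Rightarrow> real"
  assumes close: "\<And>j l. j < m \<Longrightarrow> l < m \<Longrightarrow> \<bar>A j l - B j l\<bar> \<le> s"
  shows "\<bar>(\<Sum>j<m. \<Sum>l<m. A j l * x j * x l) - (\<Sum>j<m. \<Sum>l<m. B j l * x j * x l)\<bar>
         \<le> real m * s * sqnorm m x"
proof -
  have s0: "s \<ge> 0" if "m > 0" using close[of 0 0] that by linarith
  have "\<bar>(\<Sum>j<m. \<Sum>l<m. A j l * x j * x l) - (\<Sum>j<m. \<Sum>l<m. B j l * x j * x l)\<bar>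
        = \<bar>\<Sum>j<m. \<Sum>l<m. (A j l - B j l) * x j * x l\<bar>"
    by (simp add: sum_subtractf algebra_simps)
  also have "\<dots> \<le> (\<Sum>j<m. \<Sum>l<m. \<bar>(A j l - B j l) * x j * x l\<bar>)"
    by (rule order_trans[OF sum_abs], intro sum_mono sum_abs)
  also have "\<dots> \<le> (\<Sum>j<m. \<Sum>l<m. s * \<bar>x j\<bar> * \<bar>x l\<bar>)"
    by (intro sum_mono) (auto simp: abs_mult intro!: mult_right_mono close)
  also have "\<dots> = s * (\<Sum>j<m. \<bar>x j\<bar>)\<^sup>2"
    by (simp add: power2_eq_square sum_product sum_distrib_left mult_ac)
  also have "\<dots> \<le> s * (real m * sqnorm m x)"
    using Cauchy_Schwarz_ineq_sum[of "\<lambda>_. 1" "\<lambda>j. \<bar>x j\<bar>" "{..<m}"] s0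
    by (cases "m = 0") (auto simp: sqnorm_def intro!: mult_left_mono)
  finally show ?thesis by (simp add: mult_ac)
qed

lemma mean_gram_form:
  "(\<Sum>j<m. \<Sum>l<m. mean_gram h q v j l * x j * x l)
   = sqnorm h q * (vinner m v x)\<^sup>2 + (\<Sum>j<m. (\<Sum>k<h. q k * v j - (q k * v j)\<^sup>2) * (x j)\<^sup>2)"
proof -
  define d where "d j = (\<Sum>k<h. q k * v j - (q k * v j)\<^sup>2)" for j
  have prod: "(\<Sum>k<h. q k * v j * (q k * v l)) = sqnorm h q * v j * v l" for j l
    by (simp add: sqnorm_def sum_distrib_left sum_distrib_right power2_eq_square mult_ac)
  have "mean_gram h q v j l = sqnorm h q * v j * v l + (if j = l then d j else 0)" for j l
  proof (cases "j = l")
    case True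
    have "mean_gram h q v j l = (\<Sum>k<h. q k * v j * (q k * v j) + (q k * v j - (q k * v j)\<^sup>2))"
      using True by (simp add: mean_gram_def power2_eq_square)
    thus ?thesis using True by (simp add: sum.distrib prod d_def)
  qed (simp add: mean_gram_def prod)
  hence "(\<Sum>j<m. \<Sum>l<m. mean_gram h q v j l * x j * x l)
         = (\<Sum>j<m. \<Sum>l<m. sqnorm h q * (v j * x j) * (v l * x l))
           + (\<Sum>j<m. \<Sum>l<m. (if j = l then d j else 0) * x j * x l)"
    by (simp add: sum.distrib algebra_simps)
  also have "(\<Sum>j<m. \<Sum>l<m. (if j = l then d j else 0) * x j * x l) = (\<Sum>j<m. d j * (x j)\<^sup>2)"
  proof -
    have "(if j = l then d j else 0) * x j * x l = (if l = j then d j * (x j)\<^sup>2 else 0)" for j l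
      by (simp add: power2_eq_square)
    thus ?thesis by simp
  qed
  also have "(\<Sum>j<m. \<Sum>l<m. sqnorm h q * (v j * x j) * (v l * x l)) = sqnorm h q * (vinner m v x)\<^sup>2"
    by (simp add: vinner_def power2_eq_square sum_product sum_distrib_left mult_ac)
  finally show ?thesis unfolding d_def .
qed

lemma bernoulli_variance_form_bounds:
  assumes probs: "\<And>k j. k < h \<Longrightarrow> j < m \<Longrightarrow> 0 \<le> q k * v j \<and> q k * v j \<le> 1"
  shows "0 \<le> (\<Sum>j<m. (\<Sum>k<h. q k * v j - (q k * v j)\<^sup>2) * (x j)\<^sup>2)"
    and "(\<Sum>j<m. (\<Sum>k<h. q k * v j - (q k * v j)\<^sup>2) * (x j)\<^sup>2) \<le> real h * sqnorm m x"
proof -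
  have var: "0 \<le> p - p\<^sup>2" "p - p\<^sup>2 \<le> 1" if "0 \<le> p" "p \<le> 1" for p :: real
  proof -
    show "0 \<le> p - p\<^sup>2" using that by (simp add: power2_eq_square mult_left_le)
    show "p - p\<^sup>2 \<le> 1" using that zero_le_power2[of p] by linarith
  qed
  have "0 \<le> (\<Sum>k<h. q k * v j - (q k * v j)\<^sup>2)" "(\<Sum>k<h. q k * v j - (q k * v j)\<^sup>2) \<le> real h"
    if "j < m" for j
    using sum_nonneg[of "{..<h}" "\<lambda>k. q k * v j - (q k * v j)\<^sup>2"]
      sum_mono[of "{..<h}" "\<lambda>k. q k * v j - (q k * v j)\<^sup>2" "\<lambda>_. 1"] var probs that by auto
  thus "0 \<le> (\<Sum>j<m. (\<Sum>k<h. q k * v j - (q k * v j)\<^sup>2) * (x j)\<^sup>2)"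
    and "(\<Sum>j<m. (\<Sum>k<h. q k * v j - (q k * v j)\<^sup>2) * (x j)\<^sup>2) \<le> real h * sqnorm m x"
    by (auto simp: sqnorm_def sum_distrib_left intro!: sum_nonneg sum_mono mult_right_mono)
qed

locale near_rank_one_gram =
  fixes h m :: nat and M :: "nat \<Rightarrow> nat \<Rightarrow> real" and q v :: "nat \<Rightarrow> real" and s :: real
  assumes gram_close: "\<And>j l. j < m \<Longrightarrow> l < m \<Longrightarrow> \<bar>(\<Sum>k<h. M k j * M k l) - mean_gram h q v j l\<bar> \<le> s"
    and probs: "\<And>k j. k < h \<Longrightarrow> j < m \<Longrightarrow> 0 \<le> q k * v j \<and> q k * v j \<le> 1"
    and v_nonzero: "sqnorm m v > 0"
begin

lemma sqnorm_mv_close: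
  "\<bar>sqnorm_mv h m M x - (\<Sum>j<m. \<Sum>l<m. mean_gram h q v j l * x j * x l)\<bar> \<le> real m * s * sqnorm m x"
  unfolding sqnorm_mv_eq_gram by (rule bilinear_form_diff_le) (rule gram_close)

lemma sqnorm_mv_le:
  "sqnorm_mv h m M x \<le> sqnorm h q * (vinner m v x)\<^sup>2 + (real h + real m * s) * sqnorm m x"
proof -
  have "(\<Sum>j<m. (\<Sum>k<h. q k * v j - (q k * v j)\<^sup>2) * (x j)\<^sup>2) \<le> real h * sqnorm m x"
    by (rule bernoulli_variance_form_bounds(2)) (rule probs)
  thus ?thesis using sqnorm_mv_close[of x]
    unfolding mean_gram_form distrib_right abs_le_iff by linarith
qed

lemma sqnorm_mv_ge:
  "sqnorm h q * (vinner m v x)\<^sup>2 - real m * s * sqnorm m x \<le> sqnorm_mv h m M x"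
proof -
  have "0 \<le> (\<Sum>j<m. (\<Sum>k<h. q k * v j - (q k * v j)\<^sup>2) * (x j)\<^sup>2)"
    by (rule bernoulli_variance_form_bounds(1)) (rule probs)
  thus ?thesis using sqnorm_mv_close[of x] unfolding mean_gram_form abs_le_iff by linarith
qed

lemma unit_maximizer_value_ge:
  assumes "unit_maximizer h m M y"
  shows "sqnorm h q * sqnorm m v - real m * s \<le> sqnorm_mv h m M y"
proof -
  define w where "w j = v j / sqrt (sqnorm m v)" for j
  note w = unit_normalize[OF v_nonzero, folded w_def]
  have "sqnorm h q * sqnorm m v - real m * s \<le> sqnorm_mv h m M w"
    using sqnorm_mv_ge[of w] w v_nonzero by simp
  also have "\<dots> \<le> sqnorm_mv h m M y"
    using assms w(1) by (simp add: unit_maximizer_def)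
  finally show ?thesis .
qed

lemma unit_maximizer_alignment:
  assumes "unit_maximizer h m M y"
  shows "sqnorm h q * sqnorm m v - real h - 2 * real m * s \<le> sqnorm h q * (vinner m v y)\<^sup>2"
  using unit_maximizer_value_ge[OF assms] sqnorm_mv_le[of y] assms
  by (simp add: unit_maximizer_def)

text \<open>Under the spectral gap, \<open>v\<close> is not orthogonal to the top eigenspace, so a combination of
  two maximizers orthogonal to \<open>v\<close> must vanish; this pins down the maximizer up to sign.\<close>
lemma leading_rsv_unique:
  assumes gap: "real h + 2 * real m * s < sqnorm h q * sqnorm m v"
    and y: "leading_rsv h m M v y" and z: "leading_rsv h m M v z" and "j < m"
  shows "y j = z j"
proof -
  have my: "unit_maximizer h m M y" and mz: "unit_maximizer h m M z"
    using y z by (simp_all add: leading_rsv_iff)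
  have "0 < sqnorm h q * (vinner m v y)\<^sup>2" "0 < sqnorm h q * (vinner m v z)\<^sup>2"
    using unit_maximizer_alignment[OF my] unit_maximizer_alignment[OF mz] gap by linarith+
  hence pos: "0 < vinner m v y" "0 < vinner m v z"
    using y z by (auto simp: leading_rsv_iff order_le_less)
  define a where "a = vinner m v z"
  define b where "b = - vinner m v y"
  define x where "x i = a * y i + b * z i" for i
  have "vinner m v x = a * vinner m v y + b * vinner m v z"
    by (simp add: x_def vinner_def sum.distrib sum_distrib_left algebra_simps)
  hence "vinner m v x = 0" by (simp add: a_def b_def)
  hence "sqnorm_mv h m M x \<le> (real h + real m * s) * sqnorm m x"
    using sqnorm_mv_le[of x] by simp
  moreover have "sqnorm_mv h m M x = sqnorm_mv h m M y * sqnorm m x"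
    unfolding x_def by (rule unit_maximizer_combination[OF my mz])
  moreover have "real h + real m * s < sqnorm_mv h m M y"
    using unit_maximizer_value_ge[OF my] gap by linarith
  ultimately have "(sqnorm_mv h m M y - (real h + real m * s)) * sqnorm m x \<le> 0"
    and "sqnorm_mv h m M y - (real h + real m * s) > 0"
    by (simp_all add: algebra_simps)
  hence "sqnorm m x \<le> 0" by (simp add: mult_le_0_iff)
  hence x0: "\<forall>i<m. a * y i = - b * z i"
    using sqnorm_nonneg[of m x] by (simp add: sqnorm_eq_0_iff x_def add_eq_0_iff)
  hence "sqnorm m (\<lambda>i. a * y i) = sqnorm m (\<lambda>i. - b * z i)"
    by (simp add: sqnorm_def)
  hence "a\<^sup>2 * sqnorm m y = (- b)\<^sup>2 * sqnorm m z"
    by (simp only: sqnorm_scale)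
  hence "a\<^sup>2 = b\<^sup>2"
    using my mz by (simp add: unit_maximizer_def)
  hence "a = - b" using pos by (simp add: a_def b_def power2_eq_iff)
  thus ?thesis using x0 pos \<open>j < m\<close> by (simp add: a_def)
qed

end

section \<open>Estimating a held-out row\<close>

lemma tail_sum_le:
  fixes x A B :: real and m n :: nat
  assumes ex: "3 * real n < exp x" and "1 \<le> n" "m \<le> n" and A: "3 * x \<le> A" and B: "x \<le> B"
  shows "real m ^ 2 * (2 * exp (- A)) + 2 * exp (- B) \<le> 3 * real n * exp (- x)"
proof -
  define y where "y = exp (- x)"
  have y0: "y > 0" unfolding y_def by simp
  have "real n * y < 1 / 3" using ex unfolding y_def by (simp add: exp_minus field_simps)
  moreover have "real m * y \<le> real n * y" using \<open>m \<le> n\<close> y0 by simp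
  ultimately have "real m * y \<le> 1 / 3" by linarith
  hence "(real m * y)\<^sup>2 \<le> (1 / 3)\<^sup>2" using y0 by (intro power_mono) auto
  hence my: "real m ^ 2 * y\<^sup>2 \<le> 1 / 9" by (simp add: power_mult_distrib power_divide)
  have "exp (- A) \<le> exp (- (3 * x))" using A by simp
  also have "exp (- (3 * x)) = y ^ 3" unfolding y_def by (simp flip: exp_of_nat_mult)
  finally have "real m ^ 2 * (2 * exp (- A)) \<le> real m ^ 2 * (2 * y ^ 3)"
    by (intro mult_left_mono) auto
  also have "\<dots> = 2 * (real m ^ 2 * y\<^sup>2) * y"
    by (simp add: power3_eq_cube power2_eq_square)
  also have "\<dots> \<le> 2 * (1 / 9) * y" using my y0 by (intro mult_right_mono mult_left_mono) auto
  moreover have "exp (- B) \<le> y" using B unfolding y_def by simp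
  ultimately have "real m ^ 2 * (2 * exp (- A)) + 2 * exp (- B) \<le> 2 / 9 * y + 2 * y"
    by linarith
  also have "\<dots> \<le> 3 * real n * y" using \<open>1 \<le> n\<close> y0 by simp
  finally show ?thesis unfolding y_def .
qed

locale held_out_row =
  fixes n h m :: nat and c \<epsilon> :: real and u v :: "nat \<Rightarrow> real"
    and sel :: "(nat \<Rightarrow> nat \<Rightarrow> real) \<Rightarrow> nat \<Rightarrow> real" and os i :: nat
  assumes n_eq: "n = 2 * h" and m_pos: "1 \<le> m" and m_le: "m \<le> n" and c_pos: "0 < c"
    and u_range: "\<And>k. k < n \<Longrightarrow> c \<le> u k \<and> u k \<le> 1"
    and v_range: "\<And>j. j < m \<Longrightarrow> c \<le> v j \<and> v j \<le> 1"
    and sel: "\<And>M. leading_rsv h m M v (sel M)"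
    and block_le: "os + h \<le> n" and i_lt: "i < n" and i_outside: "i < os \<or> os + h \<le> i"
    and eps: "0 < \<epsilon>" "\<epsilon> < 1" and regime: "4 \<le> real m * \<epsilon> * c ^ 4"
begin

abbreviation "P \<equiv> rank_one_model n m u v"

definition "Block = {os..<os + h} \<times> {..<m}"
definition "block X k j = to_real_mat X (os + k) j"
definition "est_vec X = sel (block X)"
text \<open>\<open>block X k j\<close> is defined for all \<open>k\<close>, so \<open>sel\<close> may look at rows outside the block,
  row \<open>i\<close> included; masking removes this dependence.\<close>
definition "masked_vec X = sel (block (\<lambda>x. if x \<in> Block then X x else False))"
definition "block_gram X j l = (\<Sum>k<h. of_bool (X (os + k, j) \<and> X (os + k, l)))"
definition "gram_tol = \<epsilon> * real h * c ^ 4 / 8"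
definition "row_tol = \<epsilon> * sqrt (sqnorm m v) / 2"

definition "Gram_dev =
  {X. \<exists>j<m. \<exists>l<m. gram_tol \<le> \<bar>block_gram X j l - mean_gram h (\<lambda>k. u (os + k)) v j l\<bar>}"
definition "Row_dev =
  {X. row_tol \<le> \<bar>(\<Sum>j<m. masked_vec X j * of_bool (X (i, j))) - (\<Sum>j<m. masked_vec X j * (u i * v j))\<bar>}"
definition "Est_dev =
  {X. \<epsilon> < \<bar>matvec m (to_real_mat X) (est_vec X) i / (vnorm m (est_vec X) * vnorm m v) - u i\<bar>}"

lemma prob_entries:
  assumes "finite J" "(a, b) \<in> J" "(a, l) \<in> J" "a < n" "b < m" "l < m"
  shows "measure_pmf.prob (Pi_pmf J False (\<lambda>(a, b). bernoulli_pmf (u a * v b))) {X. X (a, b) \<and> X (a, l)}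
         = (if b = l then u a * v b else u a * v b * (u a * v l))"
proof -
  have "0 \<le> u a * v j \<and> u a * v j \<le> 1" if "j < m" for j
    using u_range[OF \<open>a < n\<close>] v_range[OF that] c_pos by (auto intro: mult_le_one)
  thus ?thesis using assms by (simp add: prob_Pi_pmf_conj)
qed

lemma prob_Gram_dev_le: "measure_pmf.prob P Gram_dev \<le> real m ^ 2 * (2 * exp (- 2 * gram_tol\<^sup>2 / real h))"
proof -
  define B where "B = (\<lambda>(j, l). {X. gram_tol \<le> \<bar>block_gram X j l - mean_gram h (\<lambda>k. u (os + k)) v j l\<bar>})"
  have "Gram_dev = (\<Union>p\<in>{..<m} \<times> {..<m}. B p)" unfolding Gram_dev_def B_def by auto
  hence "measure_pmf.prob P Gram_dev \<le> (\<Sum>p\<in>{..<m} \<times> {..<m}. measure_pmf.prob P (B p))"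
    by (simp add: measure_pmf.finite_measure_subadditive_finite)
  also have "\<dots> \<le> (\<Sum>p\<in>{..<m} \<times> {..<m}. 2 * exp (- 2 * gram_tol\<^sup>2 / real h))"
  proof (intro sum_mono, clarify)
    fix j l assume jl: "j < m" "l < m"
    have h_pos: "0 < h" using m_pos m_le n_eq by simp
    have "mean_gram h (\<lambda>k. u (os + k)) v j l = (\<Sum>k<h. 1 * measure_pmf.prob P {X. X (os + k, j) \<and> X (os + k, l)})"
      unfolding mean_gram_def rank_one_model_def using block_le jl
      by (intro sum.cong refl, subst prob_entries) auto
    moreover have "measure_pmf.prob P {X. gram_tol \<le> \<bar>(\<Sum>k<h. 1 * of_bool (X (os + k, j) \<and> X (os + k, l)))
        - (\<Sum>k<h. 1 * measure_pmf.prob P {X. X (os + k, j) \<and> X (os + k, l)})\<bar>}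
      \<le> 2 * exp (- 2 * gram_tol\<^sup>2 / (\<Sum>k<h. 1\<^sup>2))"
      unfolding rank_one_model_def using block_le jl h_pos eps c_pos
      by (intro hoeffding_Pi_pmf_conj) (auto simp: disjoint_family_on_def gram_tol_def)
    ultimately show "measure_pmf.prob P (B (j, l)) \<le> 2 * exp (- 2 * gram_tol\<^sup>2 / real h)"
      by (simp add: B_def block_gram_def)
  qed
  finally show ?thesis by (simp add: power2_eq_square)
qed

lemma prob_Row_dev_le: "measure_pmf.prob P Row_dev \<le> 2 * exp (- 2 * row_tol\<^sup>2)"
proof -
  define F where "F = (\<lambda>(a, b). bernoulli_pmf (u a * v b))"
  define R where "R = {..<n} \<times> {..<m} - Block"
  define merge where "merge = (\<lambda>(f :: nat \<times> nat \<Rightarrow> bool, g) x. if x \<in> Block then f x else g x)"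
  have "P = Pi_pmf (Block \<union> R) False F"
    using block_le by (auto simp: rank_one_model_def F_def R_def Block_def intro!: arg_cong[of _ _ "\<lambda>I. Pi_pmf I _ _"])
  also have "\<dots> = map_pmf merge (pair_pmf (Pi_pmf Block False F) (Pi_pmf R False F))"
    unfolding merge_def by (rule Pi_pmf_union) (auto simp: R_def Block_def)
  finally have P_split: "P = map_pmf merge (pair_pmf (Pi_pmf Block False F) (Pi_pmf R False F))" .
  have row_in_R: "(i, j) \<in> R" if "j < m" for j
    using that i_lt i_outside by (auto simp: R_def Block_def)
  have "masked_vec (merge (f, g)) = masked_vec f" for f g
    by (simp add: masked_vec_def merge_def if_distrib cong: if_cong)
  moreover have "merge (f, g) (i, j) = g (i, j)" for f g j
    using i_outside by (auto simp: merge_def Block_def)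
  ultimately have preimage: "merge -` Row_dev = {(f, g). row_tol \<le>
      \<bar>(\<Sum>j<m. masked_vec f j * of_bool (g (i, j))) - (\<Sum>j<m. masked_vec f j * (u i * v j))\<bar>}"
    by (auto simp: Row_dev_def)
  have "measure_pmf.prob (Pi_pmf R False F) {g. (f, g) \<in> merge -` Row_dev} \<le> 2 * exp (- 2 * row_tol\<^sup>2)" for f
  proof -
    have unit: "(\<Sum>j<m. (masked_vec f j)\<^sup>2) = 1"
      using sel by (simp add: masked_vec_def leading_rsv_iff unit_maximizer_def sqnorm_def)
    have "measure_pmf.prob (Pi_pmf R False F) {g. g (i, j) \<and> g (i, j)} = u i * v j" if "j < m" for j
      using prob_entries[of R i j j] row_in_R[OF that] that i_lt by (simp add: R_def F_def)
    moreover have "measure_pmf.prob (Pi_pmf R False F) {g. row_tol \<le>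
        \<bar>(\<Sum>j<m. masked_vec f j * of_bool (g (i, j) \<and> g (i, j)))
         - (\<Sum>j<m. masked_vec f j * measure_pmf.prob (Pi_pmf R False F) {g. g (i, j) \<and> g (i, j)})\<bar>}
      \<le> 2 * exp (- 2 * row_tol\<^sup>2 / (\<Sum>j<m. (masked_vec f j)\<^sup>2))"
      using row_in_R eps sqnorm_nonneg[of m v] unit
      by (intro hoeffding_Pi_pmf_conj) (auto simp: R_def disjoint_family_on_def row_tol_def)
    ultimately show ?thesis using row_in_R unfolding preimage unit by simp
  qed
  hence "measure_pmf.prob (pair_pmf (Pi_pmf Block False F) (Pi_pmf R False F)) (merge -` Row_dev)
         \<le> 2 * exp (- 2 * row_tol\<^sup>2)"
    by (rule prob_pair_pmf_le)
  thus ?thesis by (simp add: P_split)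
qed

lemma sqnorm_v_ge: "real m * c\<^sup>2 \<le> sqnorm m v"
proof -
  have "(\<Sum>j<m. c\<^sup>2) \<le> sqnorm m v"
    unfolding sqnorm_def using v_range c_pos by (intro sum_mono power_mono) auto
  thus ?thesis by simp
qed

lemma sqnorm_block_u_ge: "real h * c\<^sup>2 \<le> sqnorm h (\<lambda>k. u (os + k))"
proof -
  have "(\<Sum>k<h. c\<^sup>2) \<le> sqnorm h (\<lambda>k. u (os + k))"
    unfolding sqnorm_def using u_range block_le c_pos by (intro sum_mono power_mono) auto
  thus ?thesis by simp
qed

lemma gram_tol_small:
  "real h + 2 * real m * gram_tol \<le> \<epsilon> / 2 * (sqnorm h (\<lambda>k. u (os + k)) * sqnorm m v)"
proof -
  define r where "r = \<epsilon> * real m * c ^ 4 / 4"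
  have "real h + 2 * real m * gram_tol = real h + real h * r"
    by (simp add: gram_tol_def r_def)
  also have "\<dots> \<le> real h * r + real h * r"
    using mult_left_mono[of 1 r "real h"] regime by (simp add: r_def mult_ac)
  also have "\<dots> = \<epsilon> / 2 * ((real h * c\<^sup>2) * (real m * c\<^sup>2))"
    by (simp add: r_def power2_eq_square power4_eq_xxxx)
  also have "\<dots> \<le> \<epsilon> / 2 * (sqnorm h (\<lambda>k. u (os + k)) * sqnorm m v)"
    using sqnorm_block_u_ge sqnorm_v_ge sqnorm_nonneg eps by (intro mult_left_mono mult_mono) auto
  finally show ?thesis .
qed

lemma sqnorm_block_u_pos: "0 < sqnorm h (\<lambda>k. u (os + k))"
proof -
  have "0 < real h * c\<^sup>2" using m_pos m_le n_eq c_pos by simp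
  thus ?thesis using sqnorm_block_u_ge by linarith
qed

lemma sqnorm_v_pos: "0 < sqnorm m v"
proof -
  have "0 < real m * c\<^sup>2" using m_pos c_pos by simp
  thus ?thesis using sqnorm_v_ge by linarith
qed

lemma spectral_gap: "real h + 2 * real m * gram_tol < sqnorm h (\<lambda>k. u (os + k)) * sqnorm m v"
proof -
  have "\<epsilon> / 2 * (sqnorm h (\<lambda>k. u (os + k)) * sqnorm m v) < sqnorm h (\<lambda>k. u (os + k)) * sqnorm m v"
    using sqnorm_block_u_pos sqnorm_v_pos eps by simp
  thus ?thesis using gram_tol_small by linarith
qed

lemma block_near_rank_one:
  assumes "X \<notin> Gram_dev"
  shows "near_rank_one_gram h m (block X) (\<lambda>k. u (os + k)) v gram_tol"
proof
  fix j l assume "j < m" "l < m"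
  moreover have "(\<Sum>k<h. block X k j * block X k l) = block_gram X j l"
    unfolding block_gram_def by (intro sum.cong refl) (simp add: block_def to_real_mat_def)
  ultimately show "\<bar>(\<Sum>k<h. block X k j * block X k l) - mean_gram h (\<lambda>k. u (os + k)) v j l\<bar> \<le> gram_tol"
    using assms by (force simp: Gram_dev_def)
next
  fix k j assume "k < h" "j < m"
  thus "0 \<le> u (os + k) * v j \<and> u (os + k) * v j \<le> 1"
    using u_range[of "os + k"] v_range[of j] block_le c_pos by (auto intro: mult_le_one)
next
  show "0 < sqnorm m v" by (rule sqnorm_v_pos)
qed

lemma est_vec_eq_masked_vec:
  assumes "X \<notin> Gram_dev" "j < m"
  shows "est_vec X j = masked_vec X j"
proof -
  interpret near_rank_one_gram h m "block X" "\<lambda>k. u (os + k)" v gram_tol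
    by (rule block_near_rank_one[OF assms(1)])
  have "leading_rsv h m (block (\<lambda>x. if x \<in> Block then X x else False)) v (masked_vec X)
      = leading_rsv h m (block X) v (masked_vec X)"
    by (rule leading_rsv_cong) (simp add: block_def Block_def to_real_mat_def)
  hence "leading_rsv h m (block X) v (masked_vec X)"
    using sel unfolding masked_vec_def by simp
  thus ?thesis
    unfolding est_vec_def by (rule leading_rsv_unique[OF spectral_gap sel _ assms(2)])
qed

lemma est_vec_alignment:
  assumes "X \<notin> Gram_dev"
  defines "r \<equiv> vinner m v (est_vec X) / sqrt (sqnorm m v)"
  shows "0 \<le> 1 - r" "1 - r \<le> \<epsilon> / 2"
proof -
  interpret near_rank_one_gram h m "block X" "\<lambda>k. u (os + k)" v gram_tol
    by (rule block_near_rank_one[OF assms(1)])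
  define U where "U = sqnorm h (\<lambda>k. u (os + k))"
  define V where "V = sqnorm m v"
  have lead: "unit_maximizer h m (block X) (est_vec X)" "0 \<le> vinner m v (est_vec X)"
    using sel by (simp_all add: est_vec_def leading_rsv_iff)
  have "0 < U" "0 < V" using sqnorm_block_u_pos sqnorm_v_pos by (simp_all add: U_def V_def)
  have r2: "r\<^sup>2 = (vinner m v (est_vec X))\<^sup>2 / V"
    using \<open>0 < V\<close> by (simp add: r_def V_def power_divide)
  have "r\<^sup>2 \<le> 1"
    using vinner_sq_le[of m v "est_vec X"] lead(1) \<open>0 < V\<close>
    by (simp add: r2 V_def unit_maximizer_def)
  moreover have "0 \<le> r" using lead(2) sqnorm_nonneg[of m v] by (simp add: r_def)
  ultimately show "0 \<le> 1 - r" by (simp add: power_le_one_iff abs_le_iff power2_le_iff_abs_le)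
  have "U * V * (1 - \<epsilon> / 2) \<le> U * (vinner m v (est_vec X))\<^sup>2"
    using unit_maximizer_alignment[OF lead(1)] gram_tol_small by (simp add: U_def V_def algebra_simps)
  hence "V * (1 - \<epsilon> / 2) \<le> (vinner m v (est_vec X))\<^sup>2"
    using \<open>0 < U\<close> by (simp add: mult.assoc)
  hence "1 - \<epsilon> / 2 \<le> r\<^sup>2"
    using \<open>0 < V\<close> by (simp add: r2 le_divide_eq mult.commute)
  moreover have "1 - r \<le> 1 - r\<^sup>2" using \<open>0 \<le> r\<close> \<open>0 \<le> 1 - r\<close> by (simp add: power2_eq_square mult_left_le)
  ultimately show "1 - r \<le> \<epsilon> / 2" by linarith
qed

lemma Est_dev_subset: "Est_dev \<subseteq> Gram_dev \<union> Row_dev"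
proof
  fix X assume X: "X \<in> Est_dev"
  show "X \<in> Gram_dev \<union> Row_dev"
  proof (cases "X \<in> Gram_dev")
    case False
    define y where "y = est_vec X"
    define \<rho> where "\<rho> = sqrt (sqnorm m v)"
    define dev where "dev = (\<Sum>j<m. masked_vec X j * of_bool (X (i, j))) - (\<Sum>j<m. masked_vec X j * (u i * v j))"
    have "\<rho> > 0" using sqnorm_v_pos by (simp add: \<rho>_def)
    have "vnorm m y = 1"
      using sel by (simp add: y_def est_vec_def leading_rsv_def)
    have "(\<Sum>j<m. masked_vec X j * of_bool (X (i, j))) = matvec m (to_real_mat X) y i"
      unfolding matvec_def y_def
      by (intro sum.cong refl) (simp add: est_vec_eq_masked_vec[OF False] to_real_mat_def)
    moreover have "(\<Sum>j<m. masked_vec X j * (u i * v j)) = u i * vinner m v y"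
      unfolding vinner_def y_def sum_distrib_left
      by (intro sum.cong refl) (simp add: est_vec_eq_masked_vec[OF False])
    ultimately have "dev = matvec m (to_real_mat X) y i - u i * vinner m v y"
      by (simp add: dev_def)
    with \<open>vnorm m y = 1\<close> have split: "matvec m (to_real_mat X) y i / (vnorm m y * vnorm m v) - u i
        = dev / \<rho> - u i * (1 - vinner m v y / \<rho>)"
      using \<open>\<rho> > 0\<close> by (simp add: \<rho>_def vnorm_eq_sqrt_sqnorm field_simps)
    have "\<bar>u i * (1 - vinner m v y / \<rho>)\<bar> \<le> 1 * (\<epsilon> / 2)"
      using est_vec_alignment[OF False] u_range[OF i_lt] c_pos
      unfolding abs_mult y_def \<rho>_def by (intro mult_mono) auto
    moreover have "\<epsilon> < \<bar>dev / \<rho> - u i * (1 - vinner m v y / \<rho>)\<bar>"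
      using X split by (simp add: Est_dev_def y_def)
    moreover have "\<bar>dev / \<rho> - u i * (1 - vinner m v y / \<rho>)\<bar> \<le> \<bar>dev\<bar> / \<rho> + \<bar>u i * (1 - vinner m v y / \<rho>)\<bar>"
      using abs_triangle_ineq4[of "dev / \<rho>"] \<open>\<rho> > 0\<close> by simp
    ultimately have "\<epsilon> / 2 < \<bar>dev\<bar> / \<rho>" by linarith
    hence "row_tol \<le> \<bar>dev\<bar>" using \<open>\<rho> > 0\<close> by (simp add: row_tol_def \<rho>_def field_simps)
    thus ?thesis by (simp add: Row_dev_def dev_def)
  qed simp
qed

lemma prob_Est_dev_le:
  assumes "3 * real n < exp x" "3 * x \<le> \<epsilon>\<^sup>2 * real h * c ^ 8 / 32" "x \<le> \<epsilon>\<^sup>2 * real m * c\<^sup>2 / 2"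
  shows "measure_pmf.prob P Est_dev \<le> 3 * real n * exp (- x)"
proof -
  have "2 * gram_tol\<^sup>2 / real h = \<epsilon>\<^sup>2 * real h * c ^ 8 / 32"
    using m_pos m_le n_eq by (simp add: gram_tol_def power2_eq_square field_simps)
  moreover have "\<epsilon>\<^sup>2 * real m * c\<^sup>2 / 2 \<le> 2 * row_tol\<^sup>2"
    using mult_left_mono[OF sqnorm_v_ge, of "\<epsilon>\<^sup>2"] sqnorm_nonneg[of m v]
    by (simp add: row_tol_def power_mult_distrib power_divide mult_ac)
  ultimately have "real m ^ 2 * (2 * exp (- (2 * gram_tol\<^sup>2 / real h))) + 2 * exp (- (2 * row_tol\<^sup>2))
      \<le> 3 * real n * exp (- x)"
    using assms i_lt m_le by (intro tail_sum_le) auto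
  moreover have "measure_pmf.prob P Est_dev \<le> measure_pmf.prob P (Gram_dev \<union> Row_dev)"
    using Est_dev_subset by (rule measure_pmf.finite_measure_mono) simp
  moreover have "\<dots> \<le> measure_pmf.prob P Gram_dev + measure_pmf.prob P Row_dev"
    by (rule measure_Un_le) simp_all
  ultimately show ?thesis using prob_Gram_dev_le prob_Row_dev_le by simp
qed

end

section \<open>The split spectral estimator\<close>

text \<open>Only the second term of the minimum defining \<open>C1\<close> is needed.\<close>
lemma C1_le:
  fixes c :: real assumes "0 < c" "c < 1"
  shows "C1 c \<le> c ^ 10 / 576"
proof -
  define b where "b = 6 * C3 c / c"
  define d where "d = 24 / c ^ 5"
  have "d = 6 * (4 / c ^ 4) / c" by (simp add: d_def power_Suc2[of c 4, simplified])
  also have "\<dots> \<le> b" unfolding b_def C3_def using assms by (intro divide_right_mono) auto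
  finally have "d \<le> b" .
  moreover have "0 < d" using assms by (simp add: d_def)
  ultimately have "0 < b" "1 / b\<^sup>2 \<le> 1 / d\<^sup>2"
    by (auto intro!: divide_left_mono power_mono mult_pos_pos)
  have "b powr -2 = 1 / b\<^sup>2"
    using \<open>0 < b\<close> by (simp add: powr_minus powr_realpow divide_inverse)
  also have "\<dots> \<le> 1 / d\<^sup>2" by fact
  also have "1 / d\<^sup>2 = c ^ 10 / 576" by (simp add: d_def power_divide flip: power_mult)
  finally have "b powr -2 \<le> c ^ 10 / 576" .
  thus ?thesis unfolding C1_def b_def by simp
qed

text \<open>Unless the claimed bound is trivial, \<open>m \<epsilon> c\<^sup>4\<close> is large and the exponent is small enough
  for both Hoeffding bounds.\<close>
lemma C1_regime:
  fixes c \<epsilon> :: real and n m h :: nat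
  assumes c: "0 < c" "c < 1" and eps: "0 < \<epsilon>" "\<epsilon> < 1" and "m \<le> 2 * h" "1 \<le> n"
    and nontrivial: "3 * real n < exp (C1 c * real m * \<epsilon>\<^sup>2)"
  shows "4 \<le> real m * \<epsilon> * c ^ 4"
    and "3 * (C1 c * real m * \<epsilon>\<^sup>2) \<le> \<epsilon>\<^sup>2 * real h * c ^ 8 / 32"
    and "C1 c * real m * \<epsilon>\<^sup>2 \<le> \<epsilon>\<^sup>2 * real m * c\<^sup>2 / 2"
proof -
  define z where "z = real m * \<epsilon>\<^sup>2"
  have z0: "0 \<le> z" by (simp add: z_def)
  have x_le: "C1 c * real m * \<epsilon>\<^sup>2 \<le> c ^ 10 / 576 * z"
    using mult_right_mono[OF C1_le[OF c] z0] by (simp add: z_def mult_ac)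
  have c10: "c ^ 10 \<le> c ^ 8" "c ^ 8 \<le> c ^ 4" "c ^ 8 \<le> c\<^sup>2"
    using c by (auto intro: power_decreasing)
  have "1 < C1 c * real m * \<epsilon>\<^sup>2"
  proof (rule ccontr)
    assume "\<not> 1 < C1 c * real m * \<epsilon>\<^sup>2"
    hence "exp (C1 c * real m * \<epsilon>\<^sup>2) \<le> exp 1" by simp
    also have "\<dots> < 3" using e_less_272 by simp
    finally show False using nontrivial \<open>1 \<le> n\<close> by simp
  qed
  also have "\<dots> \<le> c ^ 4 / 576 * (real m * \<epsilon>)"
  proof -
    have "\<epsilon>\<^sup>2 \<le> \<epsilon>" using eps by (simp add: power2_eq_square mult_left_le)
    hence "z \<le> real m * \<epsilon>" by (simp add: z_def mult_left_mono)
    moreover have "c ^ 10 \<le> c ^ 4" using c10 by linarith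
    ultimately have "c ^ 10 / 576 * z \<le> c ^ 4 / 576 * (real m * \<epsilon>)"
      using z0 by (intro mult_mono divide_right_mono) auto
    thus ?thesis using x_le by linarith
  qed
  finally show "4 \<le> real m * \<epsilon> * c ^ 4" by (simp add: mult_ac)
  have "z \<le> 2 * real h * \<epsilon>\<^sup>2" unfolding z_def using \<open>m \<le> 2 * h\<close> by (intro mult_right_mono) auto
  hence "c ^ 10 / 576 * z \<le> c ^ 8 / 576 * (2 * real h * \<epsilon>\<^sup>2)"
    using c10 c z0 by (intro mult_mono divide_right_mono) auto
  hence "3 * (C1 c * real m * \<epsilon>\<^sup>2) \<le> 3 * (c ^ 8 / 576 * (2 * real h * \<epsilon>\<^sup>2))"
    using x_le by linarith
  also have "\<dots> = \<epsilon>\<^sup>2 * real h * c ^ 8 / 96" by simp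
  also have "\<dots> \<le> \<epsilon>\<^sup>2 * real h * c ^ 8 / 32" by simp
  finally show "3 * (C1 c * real m * \<epsilon>\<^sup>2) \<le> \<epsilon>\<^sup>2 * real h * c ^ 8 / 32" .
  have "c ^ 10 \<le> c\<^sup>2" using c10 by linarith
  hence "c ^ 10 / 576 \<le> c\<^sup>2 / 2" using zero_le_power2[of c] by linarith
  hence "c ^ 10 / 576 * z \<le> c\<^sup>2 / 2 * z" using z0 by (rule mult_right_mono)
  thus "C1 c * real m * \<epsilon>\<^sup>2 \<le> \<epsilon>\<^sup>2 * real m * c\<^sup>2 / 2" using x_le by (simp add: z_def mult_ac)
qed

lemma split_spectral_eq:
  "split_spectral n m selA selB nv X i =
     (let y = if i < n div 2 then selB (bot_half n X) else selA (top_half n X)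
      in matvec m (to_real_mat X) y i / (vnorm m y * nv))"
  by (simp add: split_spectral_def matvec_def top_half_def bot_half_def Let_def)

lemma prob_split_spectral_dev_le:
  assumes "0 < c" "n = 2 * h" "1 \<le> m" "m \<le> n"
    and "\<And>k. k < n \<Longrightarrow> c \<le> u k \<and> u k \<le> 1" "\<And>j. j < m \<Longrightarrow> c \<le> v j \<and> v j \<le> 1"
    and "\<And>M. leading_rsv h m M v (selA M)" "\<And>M. leading_rsv h m M v (selB M)"
    and "i < n" "0 < \<epsilon>" "\<epsilon> < 1" "4 \<le> real m * \<epsilon> * c ^ 4"
    and "3 * real n < exp x" "3 * x \<le> \<epsilon>\<^sup>2 * real h * c ^ 8 / 32" "x \<le> \<epsilon>\<^sup>2 * real m * c\<^sup>2 / 2"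
  shows "measure_pmf.prob (rank_one_model n m u v)
           {X. \<epsilon> < \<bar>split_spectral n m selA selB (vnorm m v) X i - u i\<bar>} \<le> 3 * real n * exp (- x)"
proof -
  define os where "os = (if i < h then h else 0)"
  define sel where "sel = (if i < h then selB else selA)"
  interpret held_out_row n h m c \<epsilon> u v sel os i
    by unfold_locales (use assms in \<open>auto simp: os_def sel_def\<close>)
  have "est_vec X = (if i < n div 2 then selB (bot_half n X) else selA (top_half n X))" for X
    unfolding est_vec_def block_def
    by (simp add: sel_def os_def bot_half_def[abs_def] top_half_def[abs_def] assms(2))
  hence "{X. \<epsilon> < \<bar>split_spectral n m selA selB (vnorm m v) X i - u i\<bar>} = Est_dev"
    by (simp add: Est_dev_def split_spectral_eq Let_def)
  thus ?thesis using prob_Est_dev_le assms(13-15) by simp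
qed

theorem theorem1:
  fixes c C :: real and n m :: nat and u v :: "nat \<Rightarrow> real"
    and selA selB :: "(nat \<Rightarrow> nat \<Rightarrow> real) \<Rightarrow> (nat \<Rightarrow> real)"
    and i :: nat and \<epsilon> :: real
  assumes "0 < c" "c < C" "C < 1"
    and "even n" "m \<le> n"
    and "\<forall>k<n. u k \<in> {c..C}" and "\<forall>j<m. v j \<in> {c..C}"
    and "\<forall>M. leading_rsv (n div 2) m M v (selA M)"
    and "\<forall>M. leading_rsv (n div 2) m M v (selB M)"
    and "i < n" and "0 < \<epsilon>" "\<epsilon> < 1"
  shows "measure_pmf.prob (rank_one_model n m u v)
           {X. \<bar>split_spectral n m selA selB (vnorm m v) X i - u i\<bar> > \<epsilon>}
         \<le> 3 * real n * exp (- C1 c * real m * \<epsilon>\<^sup>2)"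
proof (cases "3 * real n < exp (C1 c * real m * \<epsilon>\<^sup>2)")
  case False
  hence "1 \<le> 3 * real n * exp (- C1 c * real m * \<epsilon>\<^sup>2)" by (simp add: exp_minus field_simps)
  thus ?thesis using measure_pmf.prob_le_1 order_trans by blast
next
  case True
  define h where "h = n div 2"
  have n_eq: "n = 2 * h" using \<open>even n\<close> by (simp add: h_def)
  have "m \<noteq> 0"
  proof
    assume "m = 0"
    thus False using assms(8) by (simp add: leading_rsv_def vnorm_def)
  qed
  have "c < 1" using assms(2,3) by simp
  have u: "\<And>k. k < n \<Longrightarrow> c \<le> u k \<and> u k \<le> 1" and v: "\<And>j. j < m \<Longrightarrow> c \<le> v j \<and> v j \<le> 1"
    using assms(3,6,7) by fastforce+
  have selA: "\<And>M. leading_rsv h m M v (selA M)" and selB: "\<And>M. leading_rsv h m M v (selB M)"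
    using assms(8,9) by (simp_all add: h_def)
  note regime = C1_regime[OF assms(1) \<open>c < 1\<close> assms(11,12) _ _ True, of h]
  have "measure_pmf.prob (rank_one_model n m u v)
          {X. \<epsilon> < \<bar>split_spectral n m selA selB (vnorm m v) X i - u i\<bar>}
        \<le> 3 * real n * exp (- (C1 c * real m * \<epsilon>\<^sup>2))"
    using \<open>m \<noteq> 0\<close> assms(5,10) n_eq regime
    by (intro prob_split_spectral_dev_le[OF assms(1) n_eq _ assms(5) u v selA selB assms(10-12)
          _ True]) auto
  thus ?thesis by simp
qed

end
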